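(* Let $S^{\max}$, $L$, $\mathcal{C}$ and $\mathcal{O}$ be as in the context. For all $\sigma,\sigma'\in\mathbb{T}$ with $\sigma\preceq\sigma'$, we have $\mathcal{O}(\sigma)\supseteq\mathcal{O}(\sigma')$.
   Context: Let $E$ be a set of events. A trace is a finite sequence $\sigma=\sigma_0\cdots\sigma_{n-1}$ ($n\ge 0$) or an infinite sequence $\sigma_0\sigma_1\cdots$ of events; $|\sigma|$ is its length ($\infty$ if infinite) and $\mathbb{T}$ is the set of all traces (including the empty trace). Write $\sigma\preceq\sigma'$ iff $|\sigma|\le|\sigma'|$ and $\sigma_i=\sigma'_i$ for all $0\le i<|\sigma|$ (prefix order). For a finite trace $\sigma$, $\sigma\sigma'$ denotes concatenation. For $P\subseteq\mathbb{T}$, $\mathrm{pf}(P)=\{\sigma'\in\mathbb{T}\mid\exists\sigma\in P.\ \sigma'\preceq\sigma\}$. Fix $S^{\max}\subseteq\mathbb{T}$ and let $S^{\mathrm{pf}}=\mathrm{pf}(S^{\max})$ (valid traces). For $P\subseteq\mathbb{T}$, $\alpha(P)=\{\sigma\in\mathrm{pf}(P)\mid\forall\sigma'\in S^{\max}.\ \sigma\preceq\sigma'\Rightarrow\sigma'\in P\}$. Let $L\subseteq\wp(S^{\max})$ with $S^{\max},\emptyset\in L$ be such that $(L,\subseteq)$ is a complete lattice with top $S^{\max}$, bottom $\emptyset$, join $\sqcup$ and meet $\sqcap$ (least upper bounds / greatest lower bounds in $L$ w.r.t. $\subseteq$, not necessarily $\cup,\cap$). The inquiry function is $\mathcal{I}(\sigma)=\sqcap\{P\in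 L\mid \sigma\in\alpha(P)\}$ for $\sigma\in S^{\mathrm{pf}}$, and $\mathcal{I}(\sigma)=\emptyset$ for $\sigma\notin S^{\mathrm{pf}}$. A cognizance function is a map $\mathcal{C}:\mathbb{T}\to\wp(\mathbb{T})$ that is extensive ($\sigma\in\mathcal{C}(\sigma)$ for all $\sigma$), satisfies $\mathcal{C}(\sigma\sigma')=\{\tau\tau'\mid\tau\in\mathcal{C}(\sigma),\tau'\in\mathcal{C}(\sigma')\}$ for all $\sigma,\sigma'$, and satisfies $\sigma\notin S^{\mathrm{pf}}\Rightarrow\mathcal{C}(\sigma)\cap S^{\mathrm{pf}}=\emptyset$. The observation function is $\mathcal{O}(\sigma)=\sqcup\{\mathcal{I}(\sigma')\mid\sigma'\in\mathcal{C}(\sigma)\}$. *)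

theory Defs
  imports Main "HOL-Library.Sublist"
begin

datatype 'e trace = Fin "'e list" | Inf "nat \<Rightarrow> 'e"

fun tprefix :: "'e trace \<Rightarrow> 'e trace \<Rightarrow> bool" (infix "\<preceq>\<^sub>t" 50) where
  "tprefix (Fin xs) (Fin ys) = prefix xs ys"
| "tprefix (Fin xs) (Inf f) = (xs = map f [0..<length xs])"
| "tprefix (Inf f) (Fin ys) = False"
| "tprefix (Inf f) (Inf g) = (f = g)"

text \<open>Concatenation; for an infinite first argument the result is that
  argument (the paper only concatenates after finite traces).\<close>
fun tconc :: "'e trace \<Rightarrow> 'e trace \<Rightarrow> 'e trace" where
  "tconc (Fin xs) (Fin ys) = Fin (xs @ ys)"
| "tconc (Fin xs) (Inf f) = Inf (\<lambda>i. if i < length xs then xs ! i else f (i - length xs))"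
| "tconc (Inf f) _ = Inf f"

definition pf :: "'e trace set \<Rightarrow> 'e trace set" where
  "pf P = {s'. \<exists>s\<in>P. s' \<preceq>\<^sub>t s}"

definition alpha :: "'e trace set \<Rightarrow> 'e trace set \<Rightarrow> 'e trace set" where
  "alpha Smax P = {s \<in> pf P. \<forall>s'\<in>Smax. s \<preceq>\<^sub>t s' \<longrightarrow> s' \<in> P}"

definition is_Llub :: "'a set set \<Rightarrow> 'a set set \<Rightarrow> 'a set \<Rightarrow> bool" where
  "is_Llub L A P \<longleftrightarrow> P \<in> L \<and> (\<forall>Q\<in>A. Q \<subseteq> P) \<and> (\<forall>R\<in>L. (\<forall>Q\<in>A. Q \<subseteq> R) \<longrightarrow> P \<subseteq> R)"

definition is_Lglb :: "'a set set \<Rightarrow> 'a set set \<Rightarrow> 'a set \<Rightarrow> bool" where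
  "is_Lglb L A P \<longleftrightarrow> P \<in> L \<and> (\<forall>Q\<in>A. P \<subseteq> Q) \<and> (\<forall>R\<in>L. (\<forall>Q\<in>A. R \<subseteq> Q) \<longrightarrow> R \<subseteq> P)"

definition Ljoin :: "'a set set \<Rightarrow> 'a set set \<Rightarrow> 'a set" where
  "Ljoin L A = (THE P. is_Llub L A P)"

definition Lmeet :: "'a set set \<Rightarrow> 'a set set \<Rightarrow> 'a set" where
  "Lmeet L A = (THE P. is_Lglb L A P)"

definition complete_sublattice :: "'e trace set \<Rightarrow> 'e trace set set \<Rightarrow> bool" where
  "complete_sublattice Smax L \<longleftrightarrow> L \<subseteq> Pow Smax \<and> Smax \<in> L \<and> {} \<in> L \<and>
     (\<forall>A \<subseteq> L. (\<exists>P. is_Llub L A P) \<and> (\<exists>P. is_Lglb L A P))"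

definition inquiry :: "'e trace set \<Rightarrow> 'e trace set set \<Rightarrow> 'e trace \<Rightarrow> 'e trace set" where
  "inquiry Smax L s = (if s \<in> pf Smax then Lmeet L {P \<in> L. s \<in> alpha Smax P} else {})"

definition cognizance :: "'e trace set \<Rightarrow> ('e trace \<Rightarrow> 'e trace set) \<Rightarrow> bool" where
  "cognizance Smax C \<longleftrightarrow>
     (\<forall>s. s \<in> C s) \<and>
     (\<forall>s s'. (\<exists>xs. s = Fin xs) \<longrightarrow> C (tconc s s') = {tconc t t' | t t'. t \<in> C s \<and> t' \<in> C s'}) \<and>
     (\<forall>s. s \<notin> pf Smax \<longrightarrow> C s \<inter> pf Smax = {})"

definition observation :: "'e trace set \<Rightarrow> 'e trace set set \<Rightarrow> ('e trace \<Rightarrow> 'e trace set) \<Rightarrow> 'e trace \<Rightarrow> 'e trace set" where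
  "observation Smax L C s = Ljoin L {inquiry Smax L s' | s'. s' \<in> C s}"

end

theory Submission
  imports Defs
begin

text \<open>By the concatenation law of \<open>C\<close>, every trace in \<open>C s'\<close> extends some trace in
  \<open>C s\<close>. Inquiry is antitone along prefixes, since membership in \<open>alpha Smax P\<close> passes to
  valid extensions. Hence each inquiry joined into the observation of \<open>s'\<close> lies below one
  joined into the observation of \<open>s\<close>.\<close>

lemma tprefix_refl: "t \<preceq>\<^sub>t t"
  by (cases t) auto

lemma tprefix_trans: "a \<preceq>\<^sub>t b \<Longrightarrow> b \<preceq>\<^sub>t c \<Longrightarrow> a \<preceq>\<^sub>t c"
proof (cases a; cases b; cases c)
  fix xs ys g assume "a = Fin xs" "b = Fin ys" "c = Inf g" "a \<preceq>\<^sub>t b" "b \<preceq>\<^sub>t c"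
  then have xs: "prefix xs ys" and ys: "ys = map g [0..<length ys]" by simp_all
  from xs have "xs = take (length xs) ys"
    by (metis append_eq_conv_conj prefix_def)
  also have "\<dots> = map g [0..<length xs]"
    using ys prefix_length_le[OF xs] by (metis take_map take_upt add_0)
  finally show ?thesis using \<open>a = Fin xs\<close> \<open>c = Inf g\<close> by simp
qed (auto elim: prefix_order.trans)

lemma tprefix_tconc: "t \<preceq>\<^sub>t tconc t u"
  by (cases t; cases u) (auto intro: nth_equalityI)

lemma tprefix_imp_tconc:
  assumes "s \<preceq>\<^sub>t s'"
  shows "s = s' \<or> (\<exists>xs u. s = Fin xs \<and> s' = tconc s u)"
proof (cases s; cases s')
  fix xs ys assume s: "s = Fin xs" and s': "s' = Fin ys"
  with assms obtain zs where "ys = xs @ zs" by (auto simp: prefix_def)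
  with s s' have "s' = tconc s (Fin zs)" by simp
  with s show ?thesis by blast
next
  fix xs f assume s: "s = Fin xs" and s': "s' = Inf f"
  with assms have xs: "xs = map f [0..<length xs]" by simp
  have "tconc s (Inf (\<lambda>i. f (i + length xs))) = s'"
  proof -
    have "xs ! i = f i" if "i < length xs" for i
      using that xs by (metis add_0 diff_zero nth_map_upt)
    then show ?thesis unfolding s s' by (auto simp: fun_eq_iff)
  qed
  with s show ?thesis by blast
qed (use assms in auto)

lemma pf_downward_closed: "t' \<in> pf P \<Longrightarrow> t \<preceq>\<^sub>t t' \<Longrightarrow> t \<in> pf P"
  unfolding pf_def by (blast intro: tprefix_trans)

lemma alpha_prefix_mono:
  "t \<preceq>\<^sub>t t' \<Longrightarrow> t' \<in> pf Smax \<Longrightarrow> t \<in> alpha Smax P \<Longrightarrow> t' \<in> alpha Smax P"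
  unfolding alpha_def pf_def by (blast intro: tprefix_trans)

lemma is_Lglb_unique: "is_Lglb L A P \<Longrightarrow> is_Lglb L A Q \<Longrightarrow> P = Q"
  unfolding is_Lglb_def by (meson subset_antisym)

lemma is_Llub_unique: "is_Llub L A P \<Longrightarrow> is_Llub L A Q \<Longrightarrow> P = Q"
  unfolding is_Llub_def by (meson subset_antisym)

lemma Lmeet_eqI: "is_Lglb L A P \<Longrightarrow> Lmeet L A = P"
  unfolding Lmeet_def by (metis the_equality is_Lglb_unique)

lemma Ljoin_eqI: "is_Llub L A P \<Longrightarrow> Ljoin L A = P"
  unfolding Ljoin_def by (metis the_equality is_Llub_unique)

lemma is_Lglb_Lmeet:
  assumes "complete_sublattice Smax L" and "A \<subseteq> L"
  shows "is_Lglb L A (Lmeet L A)"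
proof -
  from assms obtain P where "is_Lglb L A P"
    unfolding complete_sublattice_def by blast
  then show ?thesis by (simp add: Lmeet_eqI)
qed

lemma is_Llub_Ljoin:
  assumes "complete_sublattice Smax L" and "A \<subseteq> L"
  shows "is_Llub L A (Ljoin L A)"
proof -
  from assms obtain P where "is_Llub L A P"
    unfolding complete_sublattice_def by blast
  then show ?thesis by (simp add: Ljoin_eqI)
qed

lemma is_Lglb_antimono: "is_Lglb L A P \<Longrightarrow> is_Lglb L B Q \<Longrightarrow> A \<subseteq> B \<Longrightarrow> Q \<subseteq> P"
  unfolding is_Lglb_def by (meson subsetD)

lemma is_Llub_mono:
  "is_Llub L A P \<Longrightarrow> is_Llub L B Q \<Longrightarrow> \<forall>X\<in>A. \<exists>Y\<in>B. X \<subseteq> Y \<Longrightarrow> P \<subseteq> Q"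
  unfolding is_Llub_def by (meson subset_trans)

lemma Lmeet_antimono:
  assumes "complete_sublattice Smax L" and "A \<subseteq> B" and "B \<subseteq> L"
  shows "Lmeet L B \<subseteq> Lmeet L A"
  using assms by (meson is_Lglb_antimono is_Lglb_Lmeet order_trans)

lemma Ljoin_mono:
  assumes "complete_sublattice Smax L" and "A \<subseteq> L" and "B \<subseteq> L"
    and "\<forall>X\<in>A. \<exists>Y\<in>B. X \<subseteq> Y"
  shows "Ljoin L A \<subseteq> Ljoin L B"
  using assms by (meson is_Llub_mono is_Llub_Ljoin)

lemma inquiry_in_L:
  assumes L: "complete_sublattice Smax L"
  shows "inquiry Smax L s \<in> L"
proof (cases "s \<in> pf Smax")
  case True
  have "is_Lglb L {P \<in> L. s \<in> alpha Smax P} (Lmeet L {P \<in> L. s \<in> alpha Smax P})"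
    by (rule is_Lglb_Lmeet[OF L]) blast
  with True show ?thesis unfolding inquiry_def is_Lglb_def by simp
next
  case False
  with L show ?thesis unfolding inquiry_def complete_sublattice_def by simp
qed

lemma inquiry_antimono:
  assumes L: "complete_sublattice Smax L" and "t \<preceq>\<^sub>t t'"
  shows "inquiry Smax L t' \<subseteq> inquiry Smax L t"
proof (cases "t' \<in> pf Smax")
  case True
  from True \<open>t \<preceq>\<^sub>t t'\<close> have "t \<in> pf Smax" by (rule pf_downward_closed)
  have "{P \<in> L. t \<in> alpha Smax P} \<subseteq> {P \<in> L. t' \<in> alpha Smax P}"
    using alpha_prefix_mono[OF \<open>t \<preceq>\<^sub>t t'\<close> True] by blast
  then have "Lmeet L {P \<in> L. t' \<in> alpha Smax P} \<subseteq> Lmeet L {P \<in> L. t \<in> alpha Smax P}"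
    by (rule Lmeet_antimono[OF L]) auto
  with True \<open>t \<in> pf Smax\<close> show ?thesis
    unfolding inquiry_def by simp
qed (simp add: inquiry_def)

lemma cognizance_prefix:
  assumes C: "cognizance Smax C" and "s \<preceq>\<^sub>t s'" and "t' \<in> C s'"
  shows "\<exists>t\<in>C s. t \<preceq>\<^sub>t t'"
  using tprefix_imp_tconc[OF \<open>s \<preceq>\<^sub>t s'\<close>]
proof
  assume "s = s'"
  with \<open>t' \<in> C s'\<close> show ?thesis using tprefix_refl by blast
next
  assume "\<exists>xs u. s = Fin xs \<and> s' = tconc s u"
  then obtain xs u where "s = Fin xs" "s' = tconc s u" by blast
  with C have "C s' = {tconc t t'' | t t''. t \<in> C s \<and> t'' \<in> C u}"
    unfolding cognizance_def by blast
  with \<open>t' \<in> C s'\<close> obtain t t'' where "t \<in> C s" and "t' = tconc t t''" by blast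
  then show ?thesis using tprefix_tconc by blast
qed

theorem lemma3:
  fixes Smax :: "'e trace set" and L :: "'e trace set set" and C :: "'e trace \<Rightarrow> 'e trace set"
  assumes "complete_sublattice Smax L"
    and "cognizance Smax C"
    and "s \<preceq>\<^sub>t s'"
  shows "observation Smax L C s' \<subseteq> observation Smax L C s"
proof -
  let ?I = "inquiry Smax L"
  have in_L: "{?I t | t. t \<in> C u} \<subseteq> L" for u
    using inquiry_in_L[OF assms(1)] by blast
  have "\<forall>X\<in>{?I t' | t'. t' \<in> C s'}. \<exists>Y\<in>{?I t | t. t \<in> C s}. X \<subseteq> Y"
  proof clarify
    fix t' assume "t' \<in> C s'"
    then obtain t where "t \<in> C s" and "t \<preceq>\<^sub>t t'"
      using cognizance_prefix[OF assms(2,3)] by blast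
    then show "\<exists>Y\<in>{?I t | t. t \<in> C s}. ?I t' \<subseteq> Y"
      using inquiry_antimono[OF assms(1)] by blast
  qed
  then show ?thesis
    unfolding observation_def by (rule Ljoin_mono[OF assms(1) in_L in_L])
qed

end
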